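(* Let $p(x)$ be a prior density and $p(y\mid x)$ a likelihood on $\mathbb{R}^N$ for fixed data $y$, with posterior $p(x\mid y)\propto p(x)p(y\mid x)$. Let $1\le T_r<T_{r+1}$ be temperatures and define tempered densities either by posterior tempering, $\pi_t(x)\propto p(x)^{1/T_t}p(y\mid x)^{1/T_t}$ (with $T_{r+1}<\infty$), or by likelihood tempering, $\pi_t(x)\propto p(x)\,p(y\mid x)^{1/T_t}$ ($t\in\{r,r+1\}$), assumed normalizable. Let $X_r\sim\pi_r$ and $X_{r+1}\sim\pi_{r+1}$ be independent, and define the mean swap probability $$\mathrm P[\mathrm{Swap}_{(r,r+1)}]:=\mathbb E\left[\min\left\{1,\frac{\pi_r(X_{r+1})\pi_{r+1}(X_r)}{\pi_r(X_r)\pi_{r+1}(X_{r+1})}\right\}\right].$$ Then $$\mathrm P[\mathrm{Swap}_{(r,r+1)}]=\begin{cases}2\,\mathrm P[p(X_r\mid y)<p(X_{r+1}\mid y)],&\text{posterior tempering},\\ 2\,\mathrm P[p(y\mid X_r)<p(y\mid X_{r+1})],&\text{likelihood tempering}.\end{cases}$$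
   Formalization: Both identities carry the extra hypothesis that ties are null, namely $\mathrm P[p(X_r\mid y)=p(X_{r+1}\mid y)]=0$ for posterior tempering and $\mathrm P[p(y\mid X_r)=p(y\mid X_{r+1})]=0$ for likelihood tempering. The statement above fails without it. *)

theory Defs
  imports "HOL-Probability.Probability"
begin

datatype tempering = Posterior_Tempering | Likelihood_Tempering

text \<open>Inverse temperature 1/T for a temperature T in [1, infinity]; 1/infinity = 0.\<close>
definition inv_temp :: "ereal \<Rightarrow> real" where
  "inv_temp T = real_of_ereal (inverse T)"

text \<open>Power a^b for a \<ge> 0, with the convention a^0 = 1 (also for a = 0).\<close>
definition tpow :: "real \<Rightarrow> real \<Rightarrow> real" where
  "tpow a b = (if b = 0 then 1 else a powr b)"

definition tempered_unnorm ::
  "tempering \<Rightarrow> ('x \<Rightarrow> real) \<Rightarrow> ('x \<Rightarrow> real) \<Rightarrow> ereal \<Rightarrow> 'x \<Rightarrow> real" where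
  "tempered_unnorm m prior lik T x =
     (case m of
        Posterior_Tempering \<Rightarrow> tpow (prior x) (inv_temp T) * tpow (lik x) (inv_temp T)
      | Likelihood_Tempering \<Rightarrow> prior x * tpow (lik x) (inv_temp T))"

definition tempered_density ::
  "tempering \<Rightarrow> ('x::euclidean_space \<Rightarrow> real) \<Rightarrow> ('x \<Rightarrow> real) \<Rightarrow> ereal \<Rightarrow> 'x \<Rightarrow> real" where
  "tempered_density m prior lik T x =
     tempered_unnorm m prior lik T x / integral\<^sup>L lborel (tempered_unnorm m prior lik T)"

definition posterior_density ::
  "('x::euclidean_space \<Rightarrow> real) \<Rightarrow> ('x \<Rightarrow> real) \<Rightarrow> 'x \<Rightarrow> real" where
  "posterior_density prior lik x =
     prior x * lik x / integral\<^sup>L lborel (\<lambda>z. prior z * lik z)"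

definition swap_ratio :: "('x \<Rightarrow> real) \<Rightarrow> ('x \<Rightarrow> real) \<Rightarrow> 'x \<Rightarrow> 'x \<Rightarrow> real" where
  "swap_ratio pir pir1 a b = pir b * pir1 a / (pir a * pir1 b)"

end

theory Submission
  imports Defs
begin

text \<open>
  Pointwise, f u * h v * min 1 (swap_ratio f h u v) = min (f u * h v) (f v * h u). In both
  tempering schemes the colder density is, up to constants, a higher power of the score s (the
  posterior density, resp. the likelihood) than the hotter one, so f / h is nondecreasing in s.
  The minimum is therefore f u * h v where s u < s v and f v * h u where s v < s u; exchanging u
  and v in the second region, the expectation is 2 * P[s X < s Y] plus the probability of a tie.
\<close>

text \<open>The ratio f / h is nondecreasing along s, in cross-multiplied form so that zeros of h are allowed.\<close>
definition monotone_likelihood_ratio ::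
  "('a \<Rightarrow> 'b::linorder) \<Rightarrow> ('a \<Rightarrow> real) \<Rightarrow> ('a \<Rightarrow> real) \<Rightarrow> bool" where
  "monotone_likelihood_ratio s f h \<longleftrightarrow> (\<forall>u v. s u \<le> s v \<longrightarrow> f u * h v \<le> f v * h u)"

lemma monotone_likelihood_ratio_score_mono:
  assumes "monotone_likelihood_ratio s f h" "\<And>u v. t u \<le> t v \<Longrightarrow> s u \<le> s v"
  shows "monotone_likelihood_ratio t f h"
  using assms by (simp add: monotone_likelihood_ratio_def)

lemma monotone_likelihood_ratio_divide_const:
  assumes "monotone_likelihood_ratio s f h" "0 \<le> c" "0 \<le> d"
  shows "monotone_likelihood_ratio s (\<lambda>x. f x / c) (\<lambda>x. h x / d)"
  using assms by (simp add: monotone_likelihood_ratio_def divide_right_mono)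

lemma monotone_likelihood_ratio_mult_common:
  assumes "monotone_likelihood_ratio s f h" "\<And>x. 0 \<le> \<phi> x"
  shows "monotone_likelihood_ratio s (\<lambda>x. \<phi> x * f x) (\<lambda>x. \<phi> x * h x)"
proof -
  have "\<phi> u * f u * (\<phi> v * h v) \<le> \<phi> v * f v * (\<phi> u * h u)" if "s u \<le> s v" for u v
    using assms that mult_left_mono[of "f u * h v" "f v * h u" "\<phi> u * \<phi> v"]
    by (simp add: monotone_likelihood_ratio_def ac_simps)
  then show ?thesis
    by (simp add: monotone_likelihood_ratio_def)
qed

lemma tpow_nonneg: "0 \<le> x \<Longrightarrow> 0 \<le> tpow x a"
  by (simp add: tpow_def)

lemma tpow_mult: "0 \<le> x \<Longrightarrow> 0 \<le> y \<Longrightarrow> tpow (x * y) a = tpow x a * tpow y a"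
  by (simp add: tpow_def powr_mult)

lemma tpow_mult_le_swap:
  assumes "0 \<le> x" "x \<le> y" "0 < a" "b \<le> a"
  shows "tpow x a * tpow y b \<le> tpow y a * tpow x b"
proof (cases "x = 0")
  case True
  with assms show ?thesis
    by (simp add: tpow_def mult_nonneg_nonneg)
next
  case False
  with assms have x: "0 < x" and y: "0 < y" by auto
  have tp: "tpow z c = z powr c" if "0 < z" for z c
    using that by (simp add: tpow_def)
  have "x powr (a - b) \<le> y powr (a - b)"
    using assms x by (intro powr_mono2) auto
  then have "x powr (a - b) * (x powr b * y powr b) \<le> y powr (a - b) * (x powr b * y powr b)"
    by (rule mult_right_mono) simp
  then show ?thesis
    using x y by (simp add: tp powr_diff field_simps)
qed

lemma monotone_likelihood_ratio_tpow:
  assumes "\<And>x. 0 \<le> g x" "0 < a" "b \<le> a"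
  shows "monotone_likelihood_ratio g (\<lambda>x. tpow (g x) a) (\<lambda>x. tpow (g x) b)"
  using assms tpow_mult_le_swap by (simp add: monotone_likelihood_ratio_def)

lemma mult_min_1_divide:
  fixes p q :: "'a::linordered_field"
  assumes "0 \<le> p" "0 \<le> q"
  shows "p * min 1 (q / p) = min p q"
proof (cases "p = 0")
  case False
  with assms have "p * min 1 (q / p) = min p (p * (q / p))"
    by (simp add: min_def mult_left_mono)
  with False show ?thesis by simp
qed (use assms in simp)

lemma mult_min_swap_ratio:
  fixes f h s :: "'a \<Rightarrow> real"
  assumes mlr: "monotone_likelihood_ratio s f h"
    and f: "\<And>x. 0 \<le> f x" and h: "\<And>x. 0 \<le> h x"
  shows "f u * h v * min 1 (swap_ratio f h u v)
       = f u * h v * of_bool (s u < s v) + f u * h v * of_bool (s u = s v)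
         + f v * h u * of_bool (s v < s u)"
proof -
  have "f u * h v * min 1 (swap_ratio f h u v) = min (f u * h v) (f v * h u)"
    unfolding swap_ratio_def using f h by (simp add: mult_min_1_divide mult.commute)
  moreover have "s u \<le> s v \<Longrightarrow> f u * h v \<le> f v * h u" "s v \<le> s u \<Longrightarrow> f v * h u \<le> f u * h v"
    using mlr by (auto simp: monotone_likelihood_ratio_def)
  ultimately show ?thesis
    by (cases "s u" "s v" rule: linorder_cases) auto
qed

lemma (in prob_space) indep_var_borel_imp_lborel:
  "indep_var borel X borel Y \<Longrightarrow> indep_var lborel X lborel Y"
  unfolding indep_var_def indep_vars_def2
  by (simp add: measurable_lborel2 sets_lborel case_bool_if split: bool.split cong: if_cong)

lemma (in prob_space) integral_indep_pair_density:
  fixes f h :: "'x \<Rightarrow> real" and g :: "'x \<times> 'x \<Rightarrow> real"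
  assumes S: "sigma_finite_measure S" and T: "sigma_finite_measure T"
    and X: "distributed M S X (\<lambda>x. ennreal (f x))" and Y: "distributed M T Y (\<lambda>y. ennreal (h y))"
    and indep: "indep_var S X T Y"
    and f: "\<And>x. 0 \<le> f x" and h: "\<And>y. 0 \<le> h y"
    and g[measurable]: "g \<in> borel_measurable (S \<Otimes>\<^sub>M T)" and bounded: "\<And>z. \<bar>g z\<bar> \<le> B"
  shows "integrable (S \<Otimes>\<^sub>M T) (\<lambda>z. f (fst z) * h (snd z) * g z)"
    and "(\<integral>\<omega>. g (X \<omega>, Y \<omega>) \<partial>M) = (\<integral>z. f (fst z) * h (snd z) * g z \<partial>(S \<Otimes>\<^sub>M T))"
proof -
  have "distributed M (S \<Otimes>\<^sub>M T) (\<lambda>\<omega>. (X \<omega>, Y \<omega>)) (\<lambda>(x, y). ennreal (f x) * ennreal (h y))"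
    using distributed_joint_indep[OF S T X Y indep] .
  then have XY: "distributed M (S \<Otimes>\<^sub>M T) (\<lambda>\<omega>. (X \<omega>, Y \<omega>)) (\<lambda>z. ennreal (f (fst z) * h (snd z)))"
    by (simp add: split_beta' ennreal_mult f h)
  have [measurable]: "(\<lambda>\<omega>. (X \<omega>, Y \<omega>)) \<in> measurable M (S \<Otimes>\<^sub>M T)"
    using distributed_measurable[OF XY] .
  have "integrable M (\<lambda>\<omega>. g (X \<omega>, Y \<omega>))"
    using bounded by (intro integrable_const_bound[where B = B]) auto
  then show "integrable (S \<Otimes>\<^sub>M T) (\<lambda>z. f (fst z) * h (snd z) * g z)"
    using distributed_integrable[OF XY g] f h by simp
  show "(\<integral>\<omega>. g (X \<omega>, Y \<omega>) \<partial>M) = (\<integral>z. f (fst z) * h (snd z) * g z \<partial>(S \<Otimes>\<^sub>M T))"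
    using distributed_integral[OF XY g] f h by simp
qed

lemma (in prob_space) prob_indep_pair_density:
  fixes f h :: "'x \<Rightarrow> real" and P :: "'x \<times> 'x \<Rightarrow> bool"
  assumes S: "sigma_finite_measure S" and T: "sigma_finite_measure T"
    and X: "distributed M S X (\<lambda>x. ennreal (f x))" and Y: "distributed M T Y (\<lambda>y. ennreal (h y))"
    and indep: "indep_var S X T Y"
    and f: "\<And>x. 0 \<le> f x" and h: "\<And>y. 0 \<le> h y"
    and P[measurable]: "Measurable.pred (S \<Otimes>\<^sub>M T) P"
  shows "prob {\<omega> \<in> space M. P (X \<omega>, Y \<omega>)} = (\<integral>z. f (fst z) * h (snd z) * of_bool (P z) \<partial>(S \<Otimes>\<^sub>M T))"
proof -
  have [measurable]: "X \<in> measurable M S" "Y \<in> measurable M T"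
    using distributed_measurable[OF X] distributed_measurable[OF Y] .
  have "prob {\<omega> \<in> space M. P (X \<omega>, Y \<omega>)} = (\<integral>\<omega>. indicator {\<omega> \<in> space M. P (X \<omega>, Y \<omega>)} \<omega> \<partial>M)"
    by (simp add: Int_absorb2)
  also have "\<dots> = (\<integral>\<omega>. of_bool (P (X \<omega>, Y \<omega>)) \<partial>M)"
    by (intro Bochner_Integration.integral_cong) (auto simp: indicator_def)
  also have "\<dots> = (\<integral>z. f (fst z) * h (snd z) * of_bool (P z) \<partial>(S \<Otimes>\<^sub>M T))"
    by (rule integral_indep_pair_density(2)[OF S T X Y indep f h, where B = 1]) auto
  finally show ?thesis .
qed

lemma (in prob_space) expectation_min_swap_ratio:
  fixes f h s :: "'x \<Rightarrow> real"
  assumes S: "sigma_finite_measure S"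
    and X: "distributed M S X (\<lambda>x. ennreal (f x))" and Y: "distributed M S Y (\<lambda>x. ennreal (h x))"
    and indep: "indep_var S X S Y"
    and f: "\<And>x. 0 \<le> f x" and h: "\<And>x. 0 \<le> h x"
    and [measurable]: "f \<in> borel_measurable S" "h \<in> borel_measurable S" "s \<in> borel_measurable S"
    and mlr: "monotone_likelihood_ratio s f h"
  shows "expectation (\<lambda>\<omega>. min 1 (swap_ratio f h (X \<omega>) (Y \<omega>)))
       = 2 * prob {\<omega> \<in> space M. s (X \<omega>) < s (Y \<omega>)} + prob {\<omega> \<in> space M. s (X \<omega>) = s (Y \<omega>)}"
proof -
  interpret pair_sigma_finite S S
    using S by (simp add: pair_sigma_finite_def)
  let ?SS = "S \<Otimes>\<^sub>M S"
  note pair = integral_indep_pair_density[OF S S X Y indep f h]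
  note prob_pair = prob_indep_pair_density[OF S S X Y indep f h]
  define less where "less z = f (fst z) * h (snd z) * of_bool (s (fst z) < s (snd z))" for z
  define tie where "tie z = f (fst z) * h (snd z) * of_bool (s (fst z) = s (snd z))" for z
  have [measurable]: "less \<in> borel_measurable ?SS"
    unfolding less_def by measurable
  have less_int: "integrable ?SS less" and tie_int: "integrable ?SS tie"
    unfolding less_def tie_def by (rule pair(1)[where B = 1]; measurable; simp)+
  have swapped_int: "integrable ?SS (\<lambda>z. less (snd z, fst z))"
    using integrable_product_swap[OF less_int] by (simp add: split_beta')
  have swapped: "(\<integral>z. less (snd z, fst z) \<partial>?SS) = integral\<^sup>L ?SS less"
    using integral_product_swap[of less] by (simp add: split_beta')
  have min_meas: "(\<lambda>z. min 1 (swap_ratio f h (fst z) (snd z))) \<in> borel_measurable ?SS"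
    unfolding swap_ratio_def by measurable
  have min_bounded: "\<bar>min 1 (swap_ratio f h (fst z) (snd z))\<bar> \<le> 1" for z
    using f h by (simp add: swap_ratio_def)
  have "expectation (\<lambda>\<omega>. min 1 (swap_ratio f h (X \<omega>) (Y \<omega>)))
      = (\<integral>z. f (fst z) * h (snd z) * min 1 (swap_ratio f h (fst z) (snd z)) \<partial>?SS)"
    using pair(2)[OF min_meas min_bounded] by simp
  also have "\<dots> = (\<integral>z. less z + tie z + less (snd z, fst z) \<partial>?SS)"
    unfolding less_def tie_def by (simp add: mult_min_swap_ratio[OF mlr f h])
  also have "\<dots> = integral\<^sup>L ?SS less + integral\<^sup>L ?SS tie + integral\<^sup>L ?SS less"
    using less_int tie_int swapped_int swapped by simp
  also have "\<dots> = 2 * prob {\<omega> \<in> space M. s (X \<omega>) < s (Y \<omega>)} + prob {\<omega> \<in> space M. s (X \<omega>) = s (Y \<omega>)}"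
    unfolding less_def tie_def
    using prob_pair[of "\<lambda>z. s (fst z) < s (snd z)"] prob_pair[of "\<lambda>z. s (fst z) = s (snd z)"]
    by simp
  finally show ?thesis .
qed

lemma inv_temp_pos: "0 < T \<Longrightarrow> T < \<infinity> \<Longrightarrow> 0 < inv_temp T"
  by (cases T) (auto simp: inv_temp_def)

lemma inv_temp_antimono: "0 < T \<Longrightarrow> T \<le> T' \<Longrightarrow> inv_temp T' \<le> inv_temp T"
  by (cases T; cases T') (auto simp: inv_temp_def frac_le)

definition tempering_score :: "tempering \<Rightarrow> ('x::euclidean_space \<Rightarrow> real) \<Rightarrow> ('x \<Rightarrow> real) \<Rightarrow> 'x \<Rightarrow> real" where
  "tempering_score m prior lik =
     (case m of Posterior_Tempering \<Rightarrow> posterior_density prior lik | Likelihood_Tempering \<Rightarrow> lik)"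

lemma borel_measurable_tempering_score [measurable]:
  assumes [measurable]: "prior \<in> borel_measurable borel" "lik \<in> borel_measurable borel"
  shows "tempering_score m prior lik \<in> borel_measurable borel"
  unfolding tempering_score_def posterior_density_def by (cases m) simp_all

lemma borel_measurable_tempered_density [measurable]:
  assumes [measurable]: "prior \<in> borel_measurable borel" "lik \<in> borel_measurable borel"
  shows "tempered_density m prior lik T \<in> borel_measurable borel"
  unfolding tempered_density_def tempered_unnorm_def tpow_def by (cases m) simp_all

lemma tempered_unnorm_nonneg:
  "(\<And>x. 0 \<le> prior x) \<Longrightarrow> (\<And>x. 0 \<le> lik x) \<Longrightarrow> 0 \<le> tempered_unnorm m prior lik T x"
  by (cases m) (simp_all add: tempered_unnorm_def tpow_nonneg)

lemma tempered_density_nonneg: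
  "(\<And>x. 0 \<le> prior x) \<Longrightarrow> (\<And>x. 0 \<le> lik x) \<Longrightarrow> 0 \<le> tempered_density m prior lik T x"
  by (simp add: tempered_density_def tempered_unnorm_nonneg)

lemma monotone_likelihood_ratio_tempered_unnorm:
  assumes prior: "\<And>x. 0 \<le> prior x" and lik: "\<And>x. 0 \<le> lik x"
    and temps: "0 < inv_temp T" "inv_temp T' \<le> inv_temp T"
    and post: "m = Posterior_Tempering \<Longrightarrow> 0 < integral\<^sup>L lborel (\<lambda>x. prior x * lik x)"
  shows "monotone_likelihood_ratio (tempering_score m prior lik)
           (tempered_unnorm m prior lik T) (tempered_unnorm m prior lik T')"
proof (cases m)
  case Posterior_Tempering
  have "tempered_unnorm m prior lik = (\<lambda>T x. tpow (prior x * lik x) (inv_temp T))"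
    using Posterior_Tempering prior lik by (simp add: tempered_unnorm_def tpow_mult fun_eq_iff)
  moreover have "monotone_likelihood_ratio (\<lambda>x. prior x * lik x)
      (\<lambda>x. tpow (prior x * lik x) (inv_temp T)) (\<lambda>x. tpow (prior x * lik x) (inv_temp T'))"
    using prior lik temps by (intro monotone_likelihood_ratio_tpow) auto
  moreover have "prior u * lik u \<le> prior v * lik v"
    if "tempering_score m prior lik u \<le> tempering_score m prior lik v" for u v
    using that post Posterior_Tempering
    by (simp add: tempering_score_def posterior_density_def divide_le_cancel)
  ultimately show ?thesis
    by (auto intro: monotone_likelihood_ratio_score_mono)
next
  case Likelihood_Tempering
  have "monotone_likelihood_ratio lik
      (\<lambda>x. prior x * tpow (lik x) (inv_temp T)) (\<lambda>x. prior x * tpow (lik x) (inv_temp T'))"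
    using prior lik temps
    by (intro monotone_likelihood_ratio_mult_common monotone_likelihood_ratio_tpow) auto
  moreover have "tempered_unnorm m prior lik = (\<lambda>T x. prior x * tpow (lik x) (inv_temp T))"
    using Likelihood_Tempering by (simp add: tempered_unnorm_def fun_eq_iff)
  ultimately show ?thesis
    using Likelihood_Tempering by (simp add: tempering_score_def)
qed

lemma monotone_likelihood_ratio_tempered_density:
  assumes "\<And>x. 0 \<le> prior x" "\<And>x. 0 \<le> lik x"
    and "0 < inv_temp T" "inv_temp T' \<le> inv_temp T"
    and "m = Posterior_Tempering \<Longrightarrow> 0 < integral\<^sup>L lborel (\<lambda>x. prior x * lik x)"
  shows "monotone_likelihood_ratio (tempering_score m prior lik)
           (tempered_density m prior lik T) (tempered_density m prior lik T')"
  unfolding tempered_density_def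
  by (intro monotone_likelihood_ratio_divide_const monotone_likelihood_ratio_tempered_unnorm
      Bochner_Integration.integral_nonneg tempered_unnorm_nonneg) (use assms in auto)

theorem proposition5:
  fixes prior :: "real ^ 'n \<Rightarrow> real"
    and lik :: "'y \<Rightarrow> real ^ 'n \<Rightarrow> real"
    and y :: 'y
    and Tr Tr1 :: ereal
    and mode :: tempering
    and M :: "'w measure"
    and Xr Xr1 :: "'w \<Rightarrow> real ^ 'n"
  assumes prior_nonneg: "\<And>x. prior x \<ge> 0"
    and prior_meas: "prior \<in> borel_measurable lborel"
    and prior_integrable: "integrable lborel prior"
    and prior_normalized: "integral\<^sup>L lborel prior = 1"
    and lik_nonneg: "\<And>x. lik y x \<ge> 0"
    and lik_meas: "lik y \<in> borel_measurable lborel"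
    and post_integrable: "integrable lborel (\<lambda>x. prior x * lik y x)"
    and post_pos: "integral\<^sup>L lborel (\<lambda>x. prior x * lik y x) > 0"
    and temps: "1 \<le> Tr" "Tr < Tr1"
    and post_finite: "mode = Posterior_Tempering \<Longrightarrow> Tr1 < \<infinity>"
    and normalizable: "\<And>T. T \<in> {Tr, Tr1} \<Longrightarrow>
            integrable lborel (tempered_unnorm mode prior (lik y) T)
          \<and> integral\<^sup>L lborel (tempered_unnorm mode prior (lik y) T) > 0"
    and M: "prob_space M"
    and Xr_distr: "distributed M lborel Xr
                     (\<lambda>x. ennreal (tempered_density mode prior (lik y) Tr x))"
    and Xr1_distr: "distributed M lborel Xr1
                     (\<lambda>x. ennreal (tempered_density mode prior (lik y) Tr1 x))"
    and indep: "prob_space.indep_var M borel Xr borel Xr1"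
    and no_ties: "measure M {\<omega> \<in> space M.
        (case mode of
           Posterior_Tempering \<Rightarrow>
             posterior_density prior (lik y) (Xr \<omega>) = posterior_density prior (lik y) (Xr1 \<omega>)
         | Likelihood_Tempering \<Rightarrow> lik y (Xr \<omega>) = lik y (Xr1 \<omega>))} = 0"
  shows "prob_space.expectation M
           (\<lambda>\<omega>. min 1 (swap_ratio (tempered_density mode prior (lik y) Tr)
                                   (tempered_density mode prior (lik y) Tr1)
                                   (Xr \<omega>) (Xr1 \<omega>)))
       = (case mode of
            Posterior_Tempering \<Rightarrow>
              2 * measure M {\<omega> \<in> space M.
                    posterior_density prior (lik y) (Xr \<omega>) < posterior_density prior (lik y) (Xr1 \<omega>)}
          | Likelihood_Tempering \<Rightarrow>
              2 * measure M {\<omega> \<in> space M. lik y (Xr \<omega>) < lik y (Xr1 \<omega>)})"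
proof -
  interpret prob_space M by (rule M)
  let ?\<pi> = "tempered_density mode prior (lik y)" and ?s = "tempering_score mode prior (lik y)"
  have [measurable]: "prior \<in> borel_measurable borel" "lik y \<in> borel_measurable borel"
    using prior_meas lik_meas by simp_all
  have "0 < Tr" "Tr < \<infinity>"
    using temps by (auto intro: less_le_trans[of 0 1])
  then have "monotone_likelihood_ratio ?s (?\<pi> Tr) (?\<pi> Tr1)"
    using temps prior_nonneg lik_nonneg post_pos
    by (intro monotone_likelihood_ratio_tempered_density inv_temp_pos inv_temp_antimono) auto
  then have "expectation (\<lambda>\<omega>. min 1 (swap_ratio (?\<pi> Tr) (?\<pi> Tr1) (Xr \<omega>) (Xr1 \<omega>)))
      = 2 * prob {\<omega> \<in> space M. ?s (Xr \<omega>) < ?s (Xr1 \<omega>)} + prob {\<omega> \<in> space M. ?s (Xr \<omega>) = ?s (Xr1 \<omega>)}"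
    using prior_nonneg lik_nonneg
    by (intro expectation_min_swap_ratio[OF lborel.sigma_finite_measure_axioms Xr_distr Xr1_distr
          indep_var_borel_imp_lborel[OF indep]]) (auto intro: tempered_density_nonneg)
  with no_ties show ?thesis
    by (cases mode) (simp_all add: tempering_score_def)
qed

end
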